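(* Let $\mathbb{F}$ be a field of characteristic $p$, let $\mathbb{E}$ be an extension field and let $M\le\mathbb{E}^*$ be a subgroup of order $m=r^e$ with $r$ prime and $e\ge1$. Then there is no polynomial $f\in\mathbb{F}[x]$ such that $M$ is an automatically non-standard $f$-subgroup. In particular, there is no enumeration $s_0,\ldots,s_{m-1}$ of $M$ for which $\phi_{p,m}(x)$ divides $s_0x^{m-1}+s_1x^{m-2}+\cdots+s_{m-1}$.
   Context: $\phi_{p,m}$ is the $m$th cyclotomic polynomial reduced mod $p$ (if $p>0$); when $\gcd(m,p)=1$ its zeros are the primitive $m$th roots of unity. An $f$-sequence is a two-way infinite sequence with $f(\sigma)s=0$, $(\sigma s)_n=s_{n+1}$. For $m>1$ with $\gcd(m,p)=1$ if $p>0$: if $f$ divides $(x^m-1)/((x-1)\phi_{p,m}(x))$ and an $f$-sequence $s$ of period $m$ (over an extension of $\mathbb{F}$) has $M=\{s_0,\ldots,s_{m-1}\}$ a subgroup of size $m$, then $M$ is called an automatically non-standard $f$-subgroup. *)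

theory Defs
  imports "HOL-Computational_Algebra.Polynomial"
begin

text \<open>The m-th cyclotomic polynomial over the integers, defined by the standard
recursion  x^n - 1 = prod over d dvd n of Phi_d  (Phi_0 := 1 by convention).\<close>
function cyclo :: "nat \<Rightarrow> int poly" where
  "cyclo n = (if n = 0 then 1
     else (monom 1 n - 1) div (\<Prod>d \<in> {d. d dvd n \<and> d < n}. cyclo d))"
  by auto
termination
  by (relation "measure id") auto

text \<open>phi_{p,m}: the m-th cyclotomic polynomial reduced into the field 'a
(i.e. mod p = CHAR('a) when p > 0).\<close>
definition phi_pm :: "nat \<Rightarrow> 'a::field poly" where
  "phi_pm m = map_poly of_int (cyclo m)"

text \<open>h is the embedding of the base field F into the extension E.
An f-sequence: a two-way infinite sequence s over E with f(sigma) s = 0,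
where (sigma s)_n = s_{n+1}.\<close>
definition f_sequence :: "('f::field \<Rightarrow> 'e::field) \<Rightarrow> 'f poly \<Rightarrow> (int \<Rightarrow> 'e) \<Rightarrow> bool" where
  "f_sequence h f s \<longleftrightarrow>
     (\<forall>n. (\<Sum>i\<le>degree f. h (coeff f i) * s (n + int i)) = 0)"

definition has_period :: "(int \<Rightarrow> 'e) \<Rightarrow> nat \<Rightarrow> bool" where
  "has_period s m \<longleftrightarrow> (\<forall>n. s (n + int m) = s n)"

definition mult_subgroup :: "'e::field set \<Rightarrow> bool" where
  "mult_subgroup M \<longleftrightarrow> 0 \<notin> M \<and> 1 \<in> M \<and> (\<forall>x\<in>M. \<forall>y\<in>M. x * y \<in> M)
     \<and> (\<forall>x\<in>M. inverse x \<in> M)"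

definition auto_nonstandard ::
    "('f::field \<Rightarrow> 'e::field) \<Rightarrow> nat \<Rightarrow> 'f poly \<Rightarrow> 'e set \<Rightarrow> bool" where
  "auto_nonstandard h m f M \<longleftrightarrow>
     m > 1 \<and> (CHAR('f) > 0 \<longrightarrow> coprime m CHAR('f)) \<and>
     f dvd ((monom 1 m - 1) div ([:-1, 1:] * phi_pm m)) \<and>
     (\<exists>s. f_sequence h f s \<and> has_period s m \<and> M = s ` {0..<int m}) \<and>
     mult_subgroup M \<and> finite M \<and> card M = m"

end

theory Submission
  imports Defs "HOL-Computational_Algebra.Primes"
begin

text \<open>Write m = r^(e+1) and k = r^e. Over every field the cyclotomic polynomial satisfies
  (x^k - 1) phi_m(x) = x^m - 1, so (x^m - 1)/((x - 1) phi_m(x)) = (x^k - 1)/(x - 1).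
  A polynomial f dividing it divides x^k - 1, hence every f-sequence has period k < m and
  cannot take m distinct values on a full period. Similarly, if phi_m divides
  g = s_0 x^(m-1) + ... + s_(m-1), then x^m - 1 divides (x^k - 1) g, and since deg g < m
  comparing coefficients gives s_(m-1-k) = s_(m-1).\<close>

declare cyclo.simps [simp del]

lemma hom_sum:
  assumes "h 0 = 0" and "\<And>x y. h (x + y) = h x + h y"
  shows "h (sum g A) = (\<Sum>a\<in>A. h (g a))"
  by (induction A rule: infinite_finite_induct) (simp_all add: assms)

lemma map_poly_hom_mult:
  assumes h0: "h 0 = 0" and hadd: "\<And>x y. h (x + y) = h x + h y"
    and hmult: "\<And>x y. h (x * y) = h x * h y"
  shows "map_poly h (p * q) = map_poly h p * map_poly h q"
  by (simp add: poly_eq_iff coeff_map_poly coeff_mult h0 hmult hom_sum[of h, OF h0 hadd])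

lemma map_poly_hom_monom_minus_1:
  fixes h :: "'a::comm_ring_1 \<Rightarrow> 'b::comm_ring_1"
  assumes h0: "h 0 = 0" and h1: "h 1 = 1" and hadd: "\<And>x y. h (x + y) = h x + h y"
  shows "map_poly h (monom 1 n - 1) = monom 1 n - 1"
proof -
  have "h (- 1) = - 1"
    using hadd[of 1 "- 1"] h0 h1 by (simp add: eq_neg_iff_add_eq_0 add.commute)
  then show ?thesis
    by (simp add: poly_eq_iff coeff_map_poly coeff_monom h0 h1)
qed

lemma monom_minus_1_dvd:
  "(monom (1::'a::comm_ring_1) a - 1) dvd (monom 1 (a * b) - 1)"
proof -
  have "monom (1::'a) (a * b) - 1 = (monom 1 a) ^ b - 1"
    by (simp add: monom_power)
  then show ?thesis
    by (simp add: power_diff_1_eq)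
qed

lemma degree_monom_minus_1 [simp]:
  "degree (monom (1::'a::comm_ring_1) n - 1) = n"
proof (cases n)
  case (Suc k)
  show ?thesis
  proof (rule antisym)
    show "degree (monom (1::'a) n - 1) \<le> n"
      by (rule degree_le) (auto simp: coeff_monom)
    show "n \<le> degree (monom (1::'a) n - 1)"
      by (rule le_degree) (simp add: Suc coeff_monom)
  qed
qed simp

lemma monom_minus_1_eq_0_iff [simp]:
  "monom (1::'a::comm_ring_1) n - 1 = 0 \<longleftrightarrow> n = 0"
  by (metis degree_monom_minus_1 degree_0 diff_self monom_eq_1)

lemma coeff_eq_if_monom_minus_1_dvd:
  fixes g :: "'a::idom poly"
  assumes dvd: "(monom 1 m - 1) dvd (monom 1 k - 1) * g"
    and deg: "degree g < m" and jk: "j + k < m"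
  shows "coeff g (j + k) = coeff g j"
proof -
  obtain q where q: "(monom 1 k - 1) * g = (monom 1 m - 1) * q"
    using dvd by (elim dvdE)
  have "coeff q (j + k) = 0"
  proof (cases "q = 0")
    case False
    have nonzero: "monom 1 m - 1 \<noteq> (0 :: 'a poly)"
      using jk by (simp only: monom_minus_1_eq_0_iff)
    have "m + degree q = degree ((monom 1 k - 1) * g)"
      by (simp only: q degree_mult_eq[OF nonzero False] degree_monom_minus_1)
    also have "\<dots> \<le> k + degree g"
      using degree_mult_le[of "monom 1 k - 1" g] by simp
    finally have "degree q < j + k"
      using deg by linarith
    then show ?thesis
      by (simp add: coeff_eq_0)
  qed simp
  moreover have "coeff ((monom 1 k - 1) * g) (j + k) = coeff g j - coeff g (j + k)"
    by (simp add: left_diff_distrib coeff_monom_mult)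
  moreover have "coeff ((monom 1 m - 1) * q) (j + k) = - coeff q (j + k)"
    using jk by (simp add: left_diff_distrib coeff_monom_mult)
  ultimately show ?thesis
    using q by simp
qed

lemma coeff_sum_monom_reversed:
  "coeff (\<Sum>i<m. monom (s i) (m - 1 - i)) j = (if j < m then s (m - 1 - j) else 0)"
proof -
  have "coeff (\<Sum>i<m. monom (s i) (m - 1 - i)) j = (\<Sum>i<m. if i = m - 1 - j \<and> j < m then s i else 0)"
    by (auto simp: coeff_sum intro!: sum.cong)
  then show ?thesis
    by (simp add: sum.delta)
qed

lemma cyclo_times_prod_proper_divisors:
  assumes "n > 0" and "(\<Prod>d | d dvd n \<and> d < n. cyclo d) dvd monom 1 n - 1"
  shows "cyclo n * (\<Prod>d | d dvd n \<and> d < n. cyclo d) = monom 1 n - 1"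
  using assms by (subst cyclo.simps) simp

lemma proper_divisors_prime_power:
  assumes "prime (r::nat)"
  shows "{d. d dvd r ^ Suc e \<and> d < r ^ Suc e} = {d. d dvd r ^ e}"
proof -
  have "d dvd r ^ Suc e \<and> d < r ^ Suc e \<longleftrightarrow> d dvd r ^ e" for d
  proof
    assume "d dvd r ^ Suc e \<and> d < r ^ Suc e"
    then obtain i where "d = r ^ i" "r ^ i < r ^ Suc e"
      using divides_primepow_nat[OF assms, of d "Suc e"] by auto
    then have "i \<le> e"
      using prime_gt_1_nat[OF assms] power_strict_increasing_iff[of r i "Suc e"] by simp
    then show "d dvd r ^ e"
      using \<open>d = r ^ i\<close> by (simp add: le_imp_power_dvd)
  next
    assume "d dvd r ^ e"
    moreover have "r ^ e < r ^ Suc e"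
      using prime_gt_1_nat[OF assms] by simp
    moreover have "d \<le> r ^ e"
      using \<open>d dvd r ^ e\<close> prime_gt_0_nat[OF assms] by (simp add: dvd_imp_le)
    ultimately show "d dvd r ^ Suc e \<and> d < r ^ Suc e"
      using \<open>d dvd r ^ e\<close> by (metis dvd_mult le_less_trans power_Suc)
  qed
  then show ?thesis by blast
qed

lemma cyclo_prime_power_from_divisors:
  assumes r: "prime (r::nat)"
    and prod: "(\<Prod>d | d dvd r ^ e. cyclo d) = monom 1 (r ^ e) - 1"
  shows "cyclo (r ^ Suc e) * (monom 1 (r ^ e) - 1) = monom 1 (r ^ Suc e) - 1"
proof -
  have "(monom (1::int) (r ^ e) - 1) dvd monom 1 (r ^ Suc e) - 1"
    using monom_minus_1_dvd[of "r ^ e" r] by (simp add: mult.commute)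
  then show ?thesis
    using cyclo_times_prod_proper_divisors[of "r ^ Suc e"] prime_gt_0_nat[OF r]
    by (simp only: proper_divisors_prime_power[OF r] prod) simp
qed

lemma prod_cyclo_divisors_prime_power:
  assumes r: "prime (r::nat)"
  shows "(\<Prod>d | d dvd r ^ e. cyclo d) = monom 1 (r ^ e) - 1"
proof (induction e)
  case 0
  have "{d::nat. d dvd 1 \<and> d < 1} = {}" by auto
  then have "cyclo 1 = monom 1 1 - 1"
    by (subst cyclo.simps) (simp only: prod.empty div_by_1 one_neq_zero if_False)
  moreover have "{d::nat. d dvd 1} = {1}" by auto
  ultimately show ?case by simp
next
  case (Suc e)
  have "{d. d dvd r ^ Suc e} = insert (r ^ Suc e) {d. d dvd r ^ Suc e \<and> d < r ^ Suc e}"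
    using prime_gt_0_nat[OF r] by (auto simp: le_neq_implies_less dvd_imp_le)
  then have "{d. d dvd r ^ Suc e} = insert (r ^ Suc e) {d. d dvd r ^ e}"
    by (simp only: proper_divisors_prime_power[OF r])
  moreover have "r ^ Suc e \<notin> {d. d dvd r ^ e}"
    using proper_divisors_prime_power[OF r, of e] by blast
  ultimately have "(\<Prod>d | d dvd r ^ Suc e. cyclo d) = cyclo (r ^ Suc e) * (\<Prod>d | d dvd r ^ e. cyclo d)"
    by simp
  then show ?case
    by (simp only: Suc.IH cyclo_prime_power_from_divisors[OF r Suc.IH])
qed

lemma phi_pm_prime_power:
  assumes r: "prime (r::nat)"
  shows "(monom 1 (r ^ e) - 1) * (phi_pm (r ^ Suc e) :: 'a::field poly) = monom 1 (r ^ Suc e) - 1"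
proof -
  have "map_poly (of_int :: int \<Rightarrow> 'a) (cyclo (r ^ Suc e) * (monom 1 (r ^ e) - 1))
      = monom 1 (r ^ Suc e) - 1"
    by (simp only: cyclo_prime_power_from_divisors[OF r prod_cyclo_divisors_prime_power[OF r]]
        map_poly_hom_monom_minus_1[of "of_int :: int \<Rightarrow> 'a"] of_int_0 of_int_1 of_int_add)
  then show ?thesis
    by (simp add: phi_pm_def map_poly_hom_mult map_poly_hom_monom_minus_1 mult.commute)
qed

lemma monom_minus_1_div_phi_pm_dvd:
  assumes r: "prime (r::nat)"
  shows "(monom 1 (r ^ Suc e) - 1) div ([:-1, 1:] * phi_pm (r ^ Suc e))
      dvd (monom (1::'a::field) (r ^ e) - 1)"
proof -
  have "poly (monom (1::'a) (r ^ e) - 1) 1 = 0"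
    by (simp add: poly_monom)
  then have "[:-1, 1:] dvd monom (1::'a) (r ^ e) - 1"
    using poly_eq_0_iff_dvd[of "monom (1::'a) (r ^ e) - 1" 1] by simp
  then obtain u where u: "monom (1::'a) (r ^ e) - 1 = [:-1, 1:] * u"
    by (elim dvdE)
  have prod: "monom 1 (r ^ Suc e) - 1 = ([:-1, 1:] * phi_pm (r ^ Suc e)) * u"
    by (simp only: phi_pm_prime_power[OF r, of e, symmetric] u mult_ac)
  have "monom 1 (r ^ Suc e) - 1 \<noteq> (0 :: 'a poly)"
    using prime_gt_0_nat[OF r] by (simp only: monom_minus_1_eq_0_iff) simp
  then have nonzero: "[:-1, 1:] * phi_pm (r ^ Suc e) \<noteq> (0 :: 'a poly)"
    using prod by (metis mult_zero_left)
  have "(monom 1 (r ^ Suc e) - 1) div ([:-1, 1:] * phi_pm (r ^ Suc e)) = u"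
    using prod nonzero by (metis nonzero_mult_div_cancel_left)
  then show ?thesis
    by (simp only: u dvd_triv_right)
qed

definition poly_shift :: "'a::comm_semiring_0 poly \<Rightarrow> (int \<Rightarrow> 'a) \<Rightarrow> int \<Rightarrow> 'a" where
  "poly_shift p s n = (\<Sum>i\<le>degree p. coeff p i * s (n + int i))"

lemma poly_shift_eq_sum:
  assumes "degree p \<le> N"
  shows "poly_shift p s n = (\<Sum>i\<le>N. coeff p i * s (n + int i))"
  unfolding poly_shift_def
  by (rule sum.mono_neutral_left) (use assms in \<open>auto simp: coeff_eq_0\<close>)

lemma poly_shift_add:
  "poly_shift (p + q) s n = poly_shift p s n + poly_shift q s n"
proof -
  define N where "N = max (degree p) (degree q)"
  have "degree (p + q) \<le> N" "degree p \<le> N" "degree q \<le> N"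
    unfolding N_def by (simp_all add: degree_add_le)
  then show ?thesis
    by (simp add: poly_shift_eq_sum distrib_right sum.distrib)
qed

lemma poly_shift_smult:
  "poly_shift (smult a p) s n = a * poly_shift p s n"
  using poly_shift_eq_sum[OF degree_smult_le, of a p s n]
  by (simp add: poly_shift_def sum_distrib_left mult.assoc)

lemma poly_shift_pCons_0:
  "poly_shift (pCons 0 p) s n = poly_shift p s (n + 1)"
proof -
  have "poly_shift (pCons 0 p) s n = (\<Sum>i\<le>Suc (degree p). coeff (pCons 0 p) i * s (n + int i))"
    by (rule poly_shift_eq_sum) simp
  also have "\<dots> = (\<Sum>i\<le>degree p. coeff p i * s (n + 1 + int i))"
    by (subst sum.atMost_Suc_shift) (simp del: sum.atMost_Suc add: add_ac)
  finally show ?thesis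
    by (simp add: poly_shift_def)
qed

lemma poly_shift_mult_eq_0:
  assumes "\<And>n. poly_shift p s n = 0"
  shows "poly_shift (p * q) s n = 0"
proof (induction q arbitrary: n)
  case (pCons a q)
  then show ?case
    by (simp add: mult_pCons_right poly_shift_add poly_shift_smult poly_shift_pCons_0 assms)
qed (simp add: poly_shift_def)

lemma poly_shift_monom_minus_1:
  "poly_shift (monom (1::'a::comm_ring_1) k - 1) s n = s (n + int k) - s n"
proof -
  have "poly_shift (monom (1::'a) k - 1) s n
      = (\<Sum>i\<le>k. (if i = k then s (n + int i) else 0) - (if i = 0 then s (n + int i) else 0))"
    by (auto simp: poly_shift_def coeff_monom left_diff_distrib intro!: sum.cong)
  also have "\<dots> = s (n + int k) - s n"
    by (simp add: sum_subtractf)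
  finally show ?thesis .
qed

lemma f_sequence_iff_poly_shift:
  assumes "h 0 = 0"
  shows "f_sequence h f s \<longleftrightarrow> (\<forall>n. poly_shift (map_poly h f) s n = 0)"
  using poly_shift_eq_sum[OF map_poly_degree_leq, of h f s]
  by (simp add: f_sequence_def coeff_map_poly assms)

lemma f_sequence_periodic:
  fixes h :: "'f::field \<Rightarrow> 'e::field"
  assumes h0: "h 0 = 0" and h1: "h 1 = 1" and hadd: "\<And>x y. h (x + y) = h x + h y"
    and hmult: "\<And>x y. h (x * y) = h x * h y"
    and seq: "f_sequence h f s" and dvd: "f dvd monom 1 k - 1"
  shows "s (n + int k) = s n"
proof -
  obtain q where "monom 1 k - 1 = f * q"
    using dvd by (elim dvdE)
  then have "monom 1 k - 1 = map_poly h f * map_poly h q"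
    by (metis map_poly_hom_mult[of h, OF h0 hadd hmult] map_poly_hom_monom_minus_1[OF h0 h1 hadd])
  moreover have "\<And>n. poly_shift (map_poly h f) s n = 0"
    using seq f_sequence_iff_poly_shift[of h, OF h0] by blast
  ultimately have "poly_shift (monom 1 k - 1) s n = 0"
    by (simp add: poly_shift_mult_eq_0)
  then show ?thesis
    by (simp add: poly_shift_monom_minus_1)
qed

lemma not_auto_nonstandard_prime_power:
  fixes h :: "'f::field \<Rightarrow> 'e::field"
  assumes h0: "h 0 = 0" and h1: "h 1 = 1" and hadd: "\<And>x y. h (x + y) = h x + h y"
    and hmult: "\<And>x y. h (x * y) = h x * h y"
    and r: "prime (r::nat)"
  shows "\<not> auto_nonstandard h (r ^ Suc e) f M"
proof
  define m where "m = r ^ Suc e"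
  assume A: "auto_nonstandard h (r ^ Suc e) f M"
  then have "f dvd monom 1 (r ^ e) - 1"
    using monom_minus_1_div_phi_pm_dvd[OF r, of e]
    unfolding auto_nonstandard_def by (blast intro: dvd_trans)
  moreover obtain s where "f_sequence h f s" and M: "M = s ` {0..<int m}" and "card M = m"
    using A unfolding auto_nonstandard_def m_def by blast
  ultimately have "s (int (r ^ e)) = s 0"
    using f_sequence_periodic[OF h0 h1 hadd hmult, of f s "r ^ e" 0] by simp
  moreover have "inj_on s {0..<int m}"
    using M \<open>card M = m\<close> by (intro eq_card_imp_inj_on) simp_all
  moreover have "0 < r ^ e" "r ^ e < m"
    using prime_gt_1_nat[OF r] by (simp_all add: m_def)
  ultimately show False
    by (auto dest: inj_onD)
qed

lemma not_phi_pm_dvd_enumeration: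
  assumes r: "prime (r::nat)" and inj: "inj_on s {..<r ^ Suc e}"
  shows "\<not> (phi_pm (r ^ Suc e) :: 'a::field poly) dvd (\<Sum>i<r ^ Suc e. monom (s i) (r ^ Suc e - 1 - i))"
proof
  define m where "m = r ^ Suc e"
  define k where "k = r ^ e"
  define g :: "'a poly" where "g = (\<Sum>i<m. monom (s i) (m - 1 - i))"
  have k: "0 < k" "k < m"
    using prime_gt_1_nat[OF r] by (simp_all add: k_def m_def)
  assume "phi_pm (r ^ Suc e) dvd (\<Sum>i<r ^ Suc e. monom (s i) (r ^ Suc e - 1 - i))"
  then have "(monom 1 k - 1) * phi_pm m dvd (monom 1 k - 1) * g"
    by (simp add: m_def g_def)
  then have dvd: "monom 1 m - 1 dvd (monom 1 k - 1) * g"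
    by (simp only: k_def m_def phi_pm_prime_power[OF r])
  have "degree g \<le> m - 1"
    unfolding g_def by (rule degree_le) (simp only: coeff_sum_monom_reversed, auto)
  then have "degree g < m"
    using k by linarith
  then have "coeff g (0 + k) = coeff g 0"
    using dvd k by (intro coeff_eq_if_monom_minus_1_dvd) simp_all
  then have "s (m - 1 - k) = s (m - 1)"
    using k unfolding g_def by (simp only: coeff_sum_monom_reversed) simp
  moreover have "m - 1 - k \<noteq> m - 1"
    using k by simp
  ultimately show False
    using inj k by (auto simp: m_def dest: inj_onD)
qed

theorem mainTheorem9:
  fixes h :: "'f::field \<Rightarrow> 'e::field"
    and M :: "'e set" and r e m :: nat
  assumes hom_1: "h 1 = 1"
    and hom_add: "\<And>x y. h (x + y) = h x + h y"
    and hom_mult: "\<And>x y. h (x * y) = h x * h y"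
    and sub: "mult_subgroup M" and fin: "finite M" and card: "card M = m"
    and m_def: "m = r ^ e" and r: "prime r" and e: "e \<ge> 1"
  shows "(\<nexists>f :: 'f poly. auto_nonstandard h m f M) \<and>
         (\<nexists>s :: nat \<Rightarrow> 'e. bij_betw s {..<m} M \<and>
             phi_pm m dvd (\<Sum>i<m. monom (s i) (m - 1 - i)))"
proof -
  have h0: "h 0 = 0"
    using hom_add[of 0 0] by (metis add_0 add_cancel_right_right)
  obtain e' where m: "m = r ^ Suc e'"
    using m_def e by (cases e) auto
  show ?thesis
    using not_auto_nonstandard_prime_power[OF h0 hom_1 hom_add hom_mult r, of e']
      not_phi_pm_dvd_enumeration[OF r] bij_betw_imp_inj_on
    unfolding m by blast
qed

end
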